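(* Let $\Phi=\bigvee_{j=1}^J\phi_j$ be a pleasant UCQ over $\Sigma$ and let $D$ be a structure over $\Sigma$. Then $\mathtt{cq}(\Phi)\odot\text{Þ}(D)=1+\Phi\odot D$.
   Context: Structures are finite relational structures; constants are interpreted in the vertex set $\mathcal V(D)$. For a CQ $\phi$ and structure $D$, $\phi\odot D$ is the number of maps $h:var(\phi)\to\mathcal V(D)$ sending every atom of $\phi$ (with constants interpreted) to a fact of $D$; for a UCQ $\Phi=\bigvee_j\phi_j$ (pairwise variable-disjoint disjuncts) $\Phi\odot D:=\sum_j\phi_j\odot D$. A query is pleasant if each atom contains at least one variable. Fix a relational signature $\Sigma$ (possibly with constants, not containing the symbols below) and $\Sigma^+=\Sigma\cup\{V,R,\mathsf{mars},\mathsf{venus}\}$ with $V,R$ fresh binary relations and $\mathsf{mars},\mathsf{venus}$ fresh constants. Let $\mathtt{Good}$ be the variable-free CQ consisting of $V(\mathsf{venus},\mathsf{venus})$, $R(\mathsf{venus},\mathsf{venus})$ and all atoms $A(t_1,\dots,t_k)$ with $A\in\Sigma$, each $t_i$ either $\mathsf{venus}$ or a constant of $\Sigma$, and $\mathsf{venus}$ occurring among the $t_i$ at least once. $\mathtt{Planet}(x):=R(\mathsf{venus},x)\wedge R(x,\mathsf{venus})$. $x\rhd\phi:=\phi\wedge\mathtt{Planet}(x)\wedge\bigwedge_{y\in var(\phi)}V(x,y)$. $\mathtt{RClique}_J(x_1,\dots,x_J):=\bigwedge_{j}\mathtt{Planet}(x_j)\wedge\bigwedge_{j<j'}(R(x_j,x_{j'})\wedge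 R(x_{j'},x_j))$. For a pleasant UCQ $\Phi=\bigvee_{j=1}^J\phi_j$ over $\Sigma$, $\mathtt{cq}(\Phi):=\mathtt{RClique}_J(x_1,\dots,x_J)\wedge\bigwedge_{j=1}^J(x_j\rhd\phi_j)$ with fresh variables $x_1,\dots,x_J$. The marsification $\text{Þ}(D)$ of a structure $D$ over $\Sigma$ is the structure over $\Sigma^+$ whose elements are those of $D$ together with two new distinct elements interpreting $\mathsf{mars}$ and $\mathsf{venus}$, and whose facts are: all atoms of $\mathtt{Good}\wedge\mathtt{Planet}(\mathsf{mars})$, all facts of $D$, and $V(\mathsf{mars},a)$ for every $a\in\mathcal V(D)$. *)

theory Defs
  imports "HOL-Library.FuncSet"
begin

text \<open>A relational signature Sigma is given by a finite set Rs of relation symbols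
  (of type 'r) with arity function ar, and a finite set Cs of constants (of type 'c).\<close>

datatype ('v, 'c) trm = Var 'v | Cst 'c

type_synonym ('r, 'v, 'c) atom = "'r \<times> ('v, 'c) trm list"

text \<open>A CQ is a finite set of atoms (their conjunction).\<close>
type_synonym ('r, 'v, 'c) cq = "('r, 'v, 'c) atom set"

text \<open>A UCQ is a list of CQs (its disjuncts phi_1 ... phi_J).\<close>
type_synonym ('r, 'v, 'c) ucq = "('r, 'v, 'c) cq list"

record ('r, 'c, 'e) rstruct =
  elems :: "'e set"
  facts :: "('r \<times> 'e list) set"
  cint  :: "'c \<Rightarrow> 'e"

definition wf_struct ::
  "'r set \<Rightarrow> ('r \<Rightarrow> nat) \<Rightarrow> 'c set \<Rightarrow> ('r, 'c, 'e) rstruct \<Rightarrow> bool" where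
  "wf_struct Rs ar Cs D \<longleftrightarrow>
     finite (elems D) \<and> finite (facts D) \<and>
     (\<forall>(r, es) \<in> facts D. r \<in> Rs \<and> length es = ar r \<and> set es \<subseteq> elems D) \<and>
     (\<forall>c \<in> Cs. cint D c \<in> elems D)"

fun tvars :: "('v, 'c) trm \<Rightarrow> 'v set" where
  "tvars (Var v) = {v}"
| "tvars (Cst c) = {}"

definition avars :: "('r, 'v, 'c) atom \<Rightarrow> 'v set" where
  "avars a = (\<Union>t \<in> set (snd a). tvars t)"

definition qvars :: "('r, 'v, 'c) cq \<Rightarrow> 'v set" where
  "qvars \<phi> = (\<Union>a \<in> \<phi>. avars a)"

definition cq_over :: "'r set \<Rightarrow> ('r \<Rightarrow> nat) \<Rightarrow> 'c set \<Rightarrow> ('r, 'v, 'c) cq \<Rightarrow> bool" where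
  "cq_over Rs ar Cs \<phi> \<longleftrightarrow> finite \<phi> \<and>
     (\<forall>(r, ts) \<in> \<phi>. r \<in> Rs \<and> length ts = ar r \<and> (\<forall>c. Cst c \<in> set ts \<longrightarrow> c \<in> Cs))"

definition pleasant_cq :: "('r, 'v, 'c) cq \<Rightarrow> bool" where
  "pleasant_cq \<phi> \<longleftrightarrow> (\<forall>a \<in> \<phi>. avars a \<noteq> {})"

definition pleasant_ucq :: "('r, 'v, 'c) ucq \<Rightarrow> bool" where
  "pleasant_ucq \<Phi> \<longleftrightarrow> (\<forall>\<phi> \<in> set \<Phi>. pleasant_cq \<phi>)"

definition var_disjoint :: "('r, 'v, 'c) ucq \<Rightarrow> bool" where
  "var_disjoint \<Phi> \<longleftrightarrow>
     (\<forall>i < length \<Phi>. \<forall>j < length \<Phi>. i \<noteq> j \<longrightarrow> qvars (\<Phi> ! i) \<inter> qvars (\<Phi> ! j) = {})"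

fun evalt :: "('v \<Rightarrow> 'e) \<Rightarrow> ('c \<Rightarrow> 'e) \<Rightarrow> ('v, 'c) trm \<Rightarrow> 'e" where
  "evalt h I (Var v) = h v"
| "evalt h I (Cst c) = I c"

text \<open>phi \<odot> D: number of maps h : var(phi) \<rightarrow> V(D) sending every atom to a fact.\<close>
definition count_cq :: "('r, 'v, 'c) cq \<Rightarrow> ('r, 'c, 'e) rstruct \<Rightarrow> nat" where
  "count_cq \<phi> D = card {h \<in> qvars \<phi> \<rightarrow>\<^sub>E elems D.
      \<forall>(r, ts) \<in> \<phi>. (r, map (evalt h (cint D)) ts) \<in> facts D}"

definition count_ucq :: "('r, 'v, 'c) ucq \<Rightarrow> ('r, 'c, 'e) rstruct \<Rightarrow> nat" where
  "count_ucq \<Phi> D = (\<Sum>\<phi> \<leftarrow> \<Phi>. count_cq \<phi> D)"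

datatype 'r relp = RelS 'r | RelV | RelR
datatype 'c constp = ConS 'c | Mars | Venus
datatype 'e elp = ElS 'e | ElMars | ElVenus

fun arp :: "('r \<Rightarrow> nat) \<Rightarrow> 'r relp \<Rightarrow> nat" where
  "arp ar (RelS r) = ar r"
| "arp ar RelV = 2"
| "arp ar RelR = 2"

fun lift_trm :: "('v, 'c) trm \<Rightarrow> ('v + nat, 'c constp) trm" where
  "lift_trm (Var v) = Var (Inl v)"
| "lift_trm (Cst c) = Cst (ConS c)"

definition lift_cq :: "('r, 'v, 'c) cq \<Rightarrow> ('r relp, 'v + nat, 'c constp) cq" where
  "lift_cq \<phi> = (\<lambda>(r, ts). (RelS r, map lift_trm ts)) ` \<phi>"

definition Good :: "'r set \<Rightarrow> ('r \<Rightarrow> nat) \<Rightarrow> 'c set \<Rightarrow> ('r relp, 'w, 'c constp) cq" where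
  "Good Rs ar Cs =
     {(RelV, [Cst Venus, Cst Venus]), (RelR, [Cst Venus, Cst Venus])} \<union>
     {(RelS A, ts) | A ts. A \<in> Rs \<and> length ts = ar A \<and>
        set ts \<subseteq> Cst ` (insert Venus (ConS ` Cs)) \<and> Cst Venus \<in> set ts}"

definition Planet :: "('w, 'c constp) trm \<Rightarrow> ('r relp, 'w, 'c constp) cq" where
  "Planet t = {(RelR, [Cst Venus, t]), (RelR, [t, Cst Venus])}"

definition rhd :: "nat \<Rightarrow> ('r, 'v, 'c) cq \<Rightarrow> ('r relp, 'v + nat, 'c constp) cq" where
  "rhd x \<phi> = lift_cq \<phi> \<union> Planet (Var (Inr x)) \<union>
     {(RelV, [Var (Inr x), Var (Inl y)]) | y. y \<in> qvars \<phi>}"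

definition RClique :: "nat \<Rightarrow> ('r relp, 'v + nat, 'c constp) cq" where
  "RClique J = (\<Union>j < J. Planet (Var (Inr j))) \<union>
     {(RelR, [Var (Inr j), Var (Inr j')]) | j j'. j < J \<and> j' < J \<and> j \<noteq> j'}"

text \<open>cq(Phi), with fresh variables x_j = Inr j (j = 0 .. J-1).\<close>
definition cq_of :: "('r, 'v, 'c) ucq \<Rightarrow> ('r relp, 'v + nat, 'c constp) cq" where
  "cq_of \<Phi> = RClique (length \<Phi>) \<union> (\<Union>j < length \<Phi>. rhd j (\<Phi> ! j))"

fun ground_trm :: "('c constp \<Rightarrow> 'e) \<Rightarrow> ('w, 'c constp) trm \<Rightarrow> 'e" where
  "ground_trm I (Cst c) = I c"
| "ground_trm I (Var v) = undefined"

fun mars_cint :: "('c \<Rightarrow> 'e) \<Rightarrow> 'c constp \<Rightarrow> 'e elp" where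
  "mars_cint I (ConS c) = ElS (I c)"
| "mars_cint I Mars = ElMars"
| "mars_cint I Venus = ElVenus"

definition marsify ::
  "'r set \<Rightarrow> ('r \<Rightarrow> nat) \<Rightarrow> 'c set \<Rightarrow> ('r, 'c, 'e) rstruct \<Rightarrow> ('r relp, 'c constp, 'e elp) rstruct" where
  "marsify Rs ar Cs D =
     \<lparr> elems = ElS ` elems D \<union> {ElMars, ElVenus},
       facts = (\<lambda>(r, ts). (r, map (ground_trm (mars_cint (cint D))) ts)) `
                  (Good Rs ar Cs \<union> Planet (Cst Mars) :: ('r relp, unit, 'c constp) cq)
               \<union> (\<lambda>(r, es). (RelS r, map ElS es)) ` facts D
               \<union> {(RelV, [ElMars, ElS a]) | a. a \<in> elems D},
       cint = mars_cint (cint D) \<rparr>"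

end

theory Submission
  imports Defs
begin

(*
  A homomorphism h from cq(\<Phi>) to the marsification of D sends every x_j to venus or mars,
  the only R-neighbours of venus, and at most one x_j to mars, since R(mars, mars) is not a
  fact. The atoms V(x_j, y) then leave two possibilities. If every x_j goes to venus, so does
  every variable; this map is a homomorphism because \<Phi> is pleasant, so each atom of \<phi>_j
  collapses onto a fact of Good. If x_j goes to mars, the variables of \<phi>_j are sent into D,
  where they form a homomorphism from \<phi>_j to D, and all other variables, disjoint from those
  of \<phi>_j, go to venus. Hence the homomorphisms are the all-venus map together with disjoint
  copies of the homomorphisms from the \<phi>_j to D.
*)

definition satisfies :: "('r, 'w, 'c) cq \<Rightarrow> ('r, 'c, 'e) rstruct \<Rightarrow> ('w \<Rightarrow> 'e) \<Rightarrow> bool" where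
  "satisfies \<phi> D h \<longleftrightarrow> (\<forall>(r, ts) \<in> \<phi>. (r, map (evalt h (cint D)) ts) \<in> facts D)"

definition homs :: "('r, 'w, 'c) cq \<Rightarrow> ('r, 'c, 'e) rstruct \<Rightarrow> ('w \<Rightarrow> 'e) set" where
  "homs \<phi> D = {h \<in> qvars \<phi> \<rightarrow>\<^sub>E elems D. satisfies \<phi> D h}"

lemma count_cq_eq_card_homs: "count_cq \<phi> D = card (homs \<phi> D)"
  unfolding count_cq_def homs_def satisfies_def ..

lemma mem_tvars_iff: "v \<in> tvars t \<longleftrightarrow> t = Var v"
  by (cases t) auto

lemma mem_qvars: "v \<in> qvars \<phi> \<longleftrightarrow> (\<exists>r ts. (r, ts) \<in> \<phi> \<and> Var v \<in> set ts)"
  unfolding qvars_def avars_def by (force simp: mem_tvars_iff)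

lemma qvarsI: "(r, ts) \<in> \<phi> \<Longrightarrow> Var v \<in> set ts \<Longrightarrow> v \<in> qvars \<phi>"
  unfolding mem_qvars by blast

lemma finite_tvars [simp]: "finite (tvars t)"
  by (cases t) auto

lemma finite_qvars: "finite \<phi> \<Longrightarrow> finite (qvars \<phi>)"
  unfolding qvars_def avars_def by auto

lemma finite_homs:
  assumes "finite \<phi>" "finite (elems D)"
  shows "finite (homs \<phi> D)"
proof -
  have "finite (qvars \<phi> \<rightarrow>\<^sub>E elems D)"
    using assms by (intro finite_PiE finite_qvars)
  then show ?thesis
    unfolding homs_def by simp
qed

lemma qvars_Un [simp]: "qvars (\<phi> \<union> \<psi>) = qvars \<phi> \<union> qvars \<psi>"
  unfolding qvars_def by blast

lemma qvars_UN [simp]: "qvars (\<Union>i\<in>K. \<phi> i) = (\<Union>i\<in>K. qvars (\<phi> i))"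
  unfolding qvars_def by blast

lemma qvars_Planet [simp]: "qvars (Planet (Var v)) = {v}"
  unfolding qvars_def avars_def Planet_def by auto

lemma tvars_lift_trm [simp]: "tvars (lift_trm t) = Inl ` tvars t"
  by (cases t) auto

lemma qvars_lift_cq [simp]:
  fixes \<phi> :: "('r, 'v, 'c) cq"
  shows "qvars (lift_cq \<phi>) = Inl ` qvars \<phi>"
proof -
  have "avars ((\<lambda>(r, ts). (RelS r, map lift_trm ts)) a) = Inl ` avars a"
    for a :: "('r, 'v, 'c) atom"
    by (auto simp: avars_def image_UN split: prod.split)
  then show ?thesis
    unfolding qvars_def lift_cq_def by (simp add: image_UN)
qed

lemma qvars_rhd: "qvars (rhd x \<phi>) = insert (Inr x) (Inl ` qvars \<phi>)"
  unfolding rhd_def Setcompr_eq_image by (auto simp: qvars_def[of "_ ` _"] avars_def)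

lemma qvars_RClique: "qvars (RClique J) = Inr ` {..<J}"
proof -
  have "qvars {(RelR, [Var (Inr j), Var (Inr j')]) | j j'. j < J \<and> j' < J \<and> j \<noteq> j'} \<subseteq> Inr ` {..<J}"
    by (auto simp: mem_qvars)
  then show ?thesis
    unfolding RClique_def by auto
qed

lemma qvars_cq_of: "qvars (cq_of \<Phi>) = Inr ` {..<length \<Phi>} \<union> (\<Union>j < length \<Phi>. Inl ` qvars (\<Phi> ! j))"
  unfolding cq_of_def by (auto simp: qvars_rhd qvars_RClique)

lemma satisfies_Un [simp]: "satisfies (\<phi> \<union> \<psi>) D h \<longleftrightarrow> satisfies \<phi> D h \<and> satisfies \<psi> D h"
  unfolding satisfies_def by blast

lemma satisfies_UN [simp]: "satisfies (\<Union>i\<in>K. \<phi> i) D h \<longleftrightarrow> (\<forall>i\<in>K. satisfies (\<phi> i) D h)"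
  unfolding satisfies_def by blast

lemma satisfies_Planet:
  "satisfies (Planet (Var v)) D h \<longleftrightarrow>
     (RelR, [cint D Venus, h v]) \<in> facts D \<and> (RelR, [h v, cint D Venus]) \<in> facts D"
  unfolding satisfies_def Planet_def by auto

lemma satisfies_lift_cq:
  "satisfies (lift_cq \<phi>) D h \<longleftrightarrow>
     (\<forall>(r, ts) \<in> \<phi>. (RelS r, map (evalt h (cint D) \<circ> lift_trm) ts) \<in> facts D)"
  unfolding satisfies_def lift_cq_def by auto

lemma satisfies_V_edges:
  "satisfies {(RelV, [Var (Inr x), Var (Inl y)]) | y. y \<in> Y} D h \<longleftrightarrow>
     (\<forall>y \<in> Y. (RelV, [h (Inr x), h (Inl y)]) \<in> facts D)"
  unfolding satisfies_def by auto

lemma satisfies_R_edges: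
  "satisfies {(RelR, [Var (Inr j), Var (Inr k)]) | j k. j < J \<and> k < J \<and> j \<noteq> k} D h \<longleftrightarrow>
     (\<forall>j < J. \<forall>k < J. j \<noteq> k \<longrightarrow> (RelR, [h (Inr j), h (Inr k)]) \<in> facts D)"
proof -
  have "satisfies {(RelR, [Var (Inr j), Var (Inr k)]) | j k. j < J \<and> k < J \<and> j \<noteq> k} D h \<longleftrightarrow>
      (\<forall>j k. j < J \<and> k < J \<and> j \<noteq> k \<longrightarrow>
         (RelR, map (evalt h (cint D)) [Var (Inr j), Var (Inr k)]) \<in> facts D)"
    unfolding satisfies_def by blast
  then show ?thesis
    by auto
qed

lemma satisfies_cq_of:
  "satisfies (cq_of \<Phi>) D h \<longleftrightarrow>
     (\<forall>j < length \<Phi>.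
        (RelR, [cint D Venus, h (Inr j)]) \<in> facts D \<and> (RelR, [h (Inr j), cint D Venus]) \<in> facts D) \<and>
     (\<forall>j < length \<Phi>. \<forall>k < length \<Phi>. j \<noteq> k \<longrightarrow> (RelR, [h (Inr j), h (Inr k)]) \<in> facts D) \<and>
     (\<forall>j < length \<Phi>. \<forall>y \<in> qvars (\<Phi> ! j). (RelV, [h (Inr j), h (Inl y)]) \<in> facts D) \<and>
     (\<forall>j < length \<Phi>. \<forall>(r, ts) \<in> \<Phi> ! j. (RelS r, map (evalt h (cint D) \<circ> lift_trm) ts) \<in> facts D)"
  unfolding cq_of_def RClique_def rhd_def
  by (simp only: satisfies_Un satisfies_UN satisfies_V_edges satisfies_R_edges satisfies_Planet
      satisfies_lift_cq) auto

lemma elems_marsify [simp]: "elems (marsify Rs ar Cs D) = ElS ` elems D \<union> {ElMars, ElVenus}"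
  by (simp add: marsify_def)

lemma cint_marsify [simp]: "cint (marsify Rs ar Cs D) = mars_cint (cint D)"
  by (simp add: marsify_def)

lemma facts_marsify_R_iff:
  "(RelR, [a, b]) \<in> facts (marsify Rs ar Cs D) \<longleftrightarrow>
     (a = ElVenus \<and> b = ElVenus) \<or> (a = ElVenus \<and> b = ElMars) \<or> (a = ElMars \<and> b = ElVenus)"
  unfolding marsify_def Good_def Planet_def
  by (auto intro: rev_image_eqI[of "(RelR, [Cst Venus, Cst Venus])"]
      rev_image_eqI[of "(RelR, [Cst Venus, Cst Mars])"]
      rev_image_eqI[of "(RelR, [Cst Mars, Cst Venus])"])

lemma facts_marsify_V_iff:
  "(RelV, [a, b]) \<in> facts (marsify Rs ar Cs D) \<longleftrightarrow>
     (a = ElVenus \<and> b = ElVenus) \<or> (a = ElMars \<and> b \<in> ElS ` elems D)"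
  unfolding marsify_def Good_def Planet_def
  by (auto intro: rev_image_eqI[of "(RelV, [Cst Venus, Cst Venus])"])

lemma facts_marsify_S_iff:
  "(RelS A, map ElS es) \<in> facts (marsify Rs ar Cs D) \<longleftrightarrow> (A, es) \<in> facts D"
proof
  have no_venus: "map ElS es \<noteq> map (ground_trm (mars_cint (cint D))) ts"
    if "Cst Venus \<in> set ts" for ts :: "(unit, 'c constp) trm list"
    using that
    by (metis elp.distinct(4) ground_trm.simps(1) imageE image_eqI list.set_map mars_cint.simps(3))
  assume "(RelS A, map ElS es) \<in> facts (marsify Rs ar Cs D)"
  then show "(A, es) \<in> facts D"
    unfolding marsify_def Good_def Planet_def by (auto simp: inj_def dest: no_venus)
qed (auto simp: marsify_def)

lemma evalt_lift_trm:
  "evalt h (mars_cint I) (lift_trm t) = (case t of Var v \<Rightarrow> h (Inl v) | Cst c \<Rightarrow> ElS (I c))"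
  by (cases t) auto

lemma map_evalt_lift_trm_ElS:
  assumes "\<forall>v. Var v \<in> set ts \<longrightarrow> h (Inl v) = ElS (g v)"
  shows "map (evalt h (mars_cint I) \<circ> lift_trm) ts = map ElS (map (evalt g I) ts)"
  using assms by (auto simp: evalt_lift_trm split: trm.split)

lemma lifted_atom_at_venus_in_marsify:
  assumes "A \<in> Rs" "length ts = ar A" "\<forall>c. Cst c \<in> set ts \<longrightarrow> c \<in> Cs" "Var v \<in> set ts"
    and "\<forall>v. Var v \<in> set ts \<longrightarrow> h (Inl v) = ElVenus"
  shows "(RelS A, map (evalt h (mars_cint (cint D)) \<circ> lift_trm) ts) \<in> facts (marsify Rs ar Cs D)"
proof -
  define ts' :: "(unit, 'c constp) trm list"
    where "ts' = map (case_trm (\<lambda>_. Cst Venus) (\<lambda>c. Cst (ConS c))) ts"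
  have "(RelS A, ts') \<in> Good Rs ar Cs"
    unfolding Good_def ts'_def using assms(1-4)
    by (auto split: trm.splits intro!: rev_image_eqI[of "Var v"])
  moreover have
    "map (ground_trm (mars_cint (cint D))) ts' = map (evalt h (mars_cint (cint D)) \<circ> lift_trm) ts"
    unfolding ts'_def using assms(5) by (auto simp: evalt_lift_trm split: trm.split)
  ultimately show ?thesis
    unfolding marsify_def by force
qed

locale pleasant_ucq_over_struct =
  fixes Rs :: "'r set" and ar :: "'r \<Rightarrow> nat" and Cs :: "'c set"
    and \<Phi> :: "('r, 'v, 'c) ucq" and D :: "('r, 'c, 'e) rstruct"
  assumes over_signature: "\<forall>\<phi> \<in> set \<Phi>. cq_over Rs ar Cs \<phi>"
    and disjoint_vars: "var_disjoint \<Phi>"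
    and pleasant: "pleasant_ucq \<Phi>"
    and wf_D: "wf_struct Rs ar Cs D"
begin

abbreviation "J \<equiv> length \<Phi>"
abbreviation "M \<equiv> marsify Rs ar Cs D"
abbreviation "I \<equiv> mars_cint (cint D)"

lemma atom_of_disjunct:
  assumes "j < J" "(r, ts) \<in> \<Phi> ! j"
  shows "r \<in> Rs" "length ts = ar r" "\<forall>c. Cst c \<in> set ts \<longrightarrow> c \<in> Cs" "\<exists>v. Var v \<in> set ts"
proof -
  have "\<Phi> ! j \<in> set \<Phi>"
    using assms(1) by simp
  then have "cq_over Rs ar Cs (\<Phi> ! j)" and "pleasant_cq (\<Phi> ! j)"
    using over_signature pleasant unfolding pleasant_ucq_def by auto
  then show "r \<in> Rs" "length ts = ar r" "\<forall>c. Cst c \<in> set ts \<longrightarrow> c \<in> Cs" "\<exists>v. Var v \<in> set ts"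
    using assms(2) unfolding cq_over_def pleasant_cq_def avars_def by (auto simp: mem_tvars_iff)
qed

lemma finite_disjunct: "j < J \<Longrightarrow> finite (\<Phi> ! j)"
  using over_signature unfolding cq_over_def by simp

lemma qvars_disjunct_disjoint:
  "j < J \<Longrightarrow> k < J \<Longrightarrow> j \<noteq> k \<Longrightarrow> y \<in> qvars (\<Phi> ! j) \<Longrightarrow> y \<notin> qvars (\<Phi> ! k)"
  using disjoint_vars unfolding var_disjoint_def by blast

lemma Inr_in_qvars_cq_of: "k < J \<Longrightarrow> Inr k \<in> qvars (cq_of \<Phi>)"
  by (simp add: qvars_cq_of)

lemma Inl_in_qvars_cq_of: "k < J \<Longrightarrow> y \<in> qvars (\<Phi> ! k) \<Longrightarrow> Inl y \<in> qvars (cq_of \<Phi>)"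
  by (auto simp: qvars_cq_of)

definition venus_map :: "'v + nat \<Rightarrow> 'e elp" where
  "venus_map = restrict (\<lambda>_. ElVenus) (qvars (cq_of \<Phi>))"

definition mars_map :: "nat \<Rightarrow> ('v \<Rightarrow> 'e) \<Rightarrow> 'v + nat \<Rightarrow> 'e elp" where
  "mars_map j g = restrict
     (\<lambda>w. case w of
        Inr k \<Rightarrow> if k = j then ElMars else ElVenus
      | Inl y \<Rightarrow> if y \<in> qvars (\<Phi> ! j) then ElS (g y) else ElVenus)
     (qvars (cq_of \<Phi>))"

lemma mars_map_Inr: "k < J \<Longrightarrow> mars_map j g (Inr k) = (if k = j then ElMars else ElVenus)"
  unfolding mars_map_def using Inr_in_qvars_cq_of by simp

lemma mars_map_Inl:
  "k < J \<Longrightarrow> y \<in> qvars (\<Phi> ! k) \<Longrightarrow>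
     mars_map j g (Inl y) = (if y \<in> qvars (\<Phi> ! j) then ElS (g y) else ElVenus)"
  unfolding mars_map_def using Inl_in_qvars_cq_of by simp

lemma lifted_disjunct_at_venus:
  assumes "k < J" "(r, ts) \<in> \<Phi> ! k" "\<forall>y \<in> qvars (\<Phi> ! k). h (Inl y) = ElVenus"
  shows "(RelS r, map (evalt h I \<circ> lift_trm) ts) \<in> facts M"
proof -
  obtain v where "Var v \<in> set ts"
    using atom_of_disjunct[OF assms(1,2)] by blast
  moreover have "\<forall>v. Var v \<in> set ts \<longrightarrow> h (Inl v) = ElVenus"
    using assms(2,3) by (auto intro: qvarsI)
  ultimately show ?thesis
    using atom_of_disjunct[OF assms(1,2)] by (intro lifted_atom_at_venus_in_marsify) auto
qed

lemma venus_map_in_homs: "venus_map \<in> homs (cq_of \<Phi>) M"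
  unfolding homs_def satisfies_cq_of cint_marsify
  using Inr_in_qvars_cq_of Inl_in_qvars_cq_of lifted_disjunct_at_venus[of _ _ _ venus_map]
  by (auto simp: venus_map_def facts_marsify_R_iff facts_marsify_V_iff)

lemma mars_map_in_homs:
  assumes j: "j < J" and g: "g \<in> homs (\<Phi> ! j) D"
  shows "mars_map j g \<in> homs (cq_of \<Phi>) M"
  unfolding homs_def satisfies_cq_of cint_marsify
proof (intro CollectI conjI allI impI ballI)
  show "mars_map j g \<in> qvars (cq_of \<Phi>) \<rightarrow>\<^sub>E elems M"
    using g unfolding mars_map_def homs_def by (auto simp: PiE_iff split: sum.splits)
next
  fix k y assume k: "k < J" and y: "y \<in> qvars (\<Phi> ! k)"
  show "(RelV, [mars_map j g (Inr k), mars_map j g (Inl y)]) \<in> facts M"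
    using g j k y qvars_disjunct_disjoint[OF k j _ y]
    by (auto simp: mars_map_Inr mars_map_Inl facts_marsify_V_iff homs_def)
next
  fix k x assume k: "k < J" and x: "x \<in> \<Phi> ! k"
  obtain r ts where x_def: "x = (r, ts)"
    by force
  show "case x of (r, ts) \<Rightarrow> (RelS r, map (evalt (mars_map j g) I \<circ> lift_trm) ts) \<in> facts M"
  proof (cases "k = j")
    case True
    have eval: "map (evalt (mars_map j g) I \<circ> lift_trm) ts = map ElS (map (evalt g (cint D)) ts)"
      using k x True unfolding x_def
      by (intro map_evalt_lift_trm_ElS) (simp add: mars_map_Inl qvarsI)
    have "(r, map (evalt g (cint D)) ts) \<in> facts D"
      using g x True unfolding x_def homs_def satisfies_def by auto
    then show ?thesis
      unfolding x_def case_prod_conv eval facts_marsify_S_iff .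
  next
    case False
    then have "\<forall>y \<in> qvars (\<Phi> ! k). mars_map j g (Inl y) = ElVenus"
      using j k qvars_disjunct_disjoint[OF k j] by (auto simp: mars_map_Inl)
    then show ?thesis
      using lifted_disjunct_at_venus[OF k x[unfolded x_def]] unfolding x_def by simp
  qed
qed (use j in \<open>auto simp: mars_map_Inr facts_marsify_R_iff\<close>)

lemma hom_planet:
  assumes "h \<in> homs (cq_of \<Phi>) M" "k < J"
  shows "h (Inr k) = ElVenus \<or> h (Inr k) = ElMars"
  using assms unfolding homs_def satisfies_cq_of by (auto simp: facts_marsify_R_iff)

lemma hom_unique_mars:
  assumes "h \<in> homs (cq_of \<Phi>) M" "j < J" "k < J" "j \<noteq> k" "h (Inr j) = ElMars"
  shows "h (Inr k) = ElVenus"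
  using assms unfolding homs_def satisfies_cq_of by (fastforce simp: facts_marsify_R_iff)

lemma hom_var_at_venus:
  assumes "h \<in> homs (cq_of \<Phi>) M" "k < J" "y \<in> qvars (\<Phi> ! k)" "h (Inr k) = ElVenus"
  shows "h (Inl y) = ElVenus"
  using assms unfolding homs_def satisfies_cq_of by (fastforce simp: facts_marsify_V_iff)

lemma hom_var_at_mars:
  assumes "h \<in> homs (cq_of \<Phi>) M" "k < J" "y \<in> qvars (\<Phi> ! k)" "h (Inr k) = ElMars"
  shows "h (Inl y) \<in> ElS ` elems D"
  using assms unfolding homs_def satisfies_cq_of by (fastforce simp: facts_marsify_V_iff)

lemma hom_without_mars_eq_venus_map:
  assumes h: "h \<in> homs (cq_of \<Phi>) M" and venus: "\<forall>k < J. h (Inr k) = ElVenus"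
  shows "h = venus_map"
proof (rule PiE_ext)
  show "h \<in> qvars (cq_of \<Phi>) \<rightarrow>\<^sub>E elems M" "venus_map \<in> qvars (cq_of \<Phi>) \<rightarrow>\<^sub>E elems M"
    using h venus_map_in_homs unfolding homs_def by auto
  fix w assume "w \<in> qvars (cq_of \<Phi>)"
  then show "h w = venus_map w"
    unfolding qvars_cq_of venus_map_def using hom_var_at_venus[OF h] venus by auto
qed

lemma hom_with_mars_eq_mars_map:
  assumes h: "h \<in> homs (cq_of \<Phi>) M" and j: "j < J" and mars: "h (Inr j) = ElMars"
  shows "\<exists>g \<in> homs (\<Phi> ! j) D. h = mars_map j g"
proof
  define g where "g = restrict (\<lambda>y. case h (Inl y) of ElS a \<Rightarrow> a | _ \<Rightarrow> undefined) (qvars (\<Phi> ! j))"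
  have h_Inl: "h (Inl y) = ElS (g y)" and g_elems: "g y \<in> elems D" if "y \<in> qvars (\<Phi> ! j)" for y
    using hom_var_at_mars[OF h j that mars] that unfolding g_def by auto
  have "satisfies (\<Phi> ! j) D g"
    unfolding satisfies_def
  proof clarify
    fix r ts assume atom: "(r, ts) \<in> \<Phi> ! j"
    have eval: "map (evalt h I \<circ> lift_trm) ts = map ElS (map (evalt g (cint D)) ts)"
      using h_Inl atom by (intro map_evalt_lift_trm_ElS) (blast intro: qvarsI)
    have "(RelS r, map (evalt h I \<circ> lift_trm) ts) \<in> facts M"
      using h j atom unfolding homs_def satisfies_cq_of by auto
    then show "(r, map (evalt g (cint D)) ts) \<in> facts D"
      unfolding eval facts_marsify_S_iff .
  qed
  moreover have "g \<in> qvars (\<Phi> ! j) \<rightarrow>\<^sub>E elems D"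
    using g_elems unfolding g_def by auto
  ultimately show g: "g \<in> homs (\<Phi> ! j) D"
    unfolding homs_def by blast
  show "h = mars_map j g"
  proof (rule PiE_ext)
    show "h \<in> qvars (cq_of \<Phi>) \<rightarrow>\<^sub>E elems M" "mars_map j g \<in> qvars (cq_of \<Phi>) \<rightarrow>\<^sub>E elems M"
      using h mars_map_in_homs[OF j g] unfolding homs_def by auto
    fix w assume "w \<in> qvars (cq_of \<Phi>)"
    then consider (planet) k where "k < J" "w = Inr k"
      | (var) k y where "k < J" "y \<in> qvars (\<Phi> ! k)" "w = Inl y"
      unfolding qvars_cq_of by blast
    then show "h w = mars_map j g w"
    proof cases
      case planet
      then show ?thesis
        using mars hom_unique_mars[OF h j] by (auto simp: mars_map_Inr)
    next
      case var
      show ?thesis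
      proof (cases "k = j")
        case True
        then show ?thesis
          using var h_Inl by (simp add: mars_map_Inl)
      next
        case False
        then have "h (Inl y) = ElVenus"
          using var hom_var_at_venus[OF h] hom_unique_mars[OF h j _ _ mars] by auto
        moreover have "y \<notin> qvars (\<Phi> ! j)"
          using var j False qvars_disjunct_disjoint by blast
        ultimately show ?thesis
          using var by (simp add: mars_map_Inl)
      qed
    qed
  qed
qed

lemma homs_cq_of_marsify:
  "homs (cq_of \<Phi>) M = insert venus_map (\<Union>j < J. mars_map j ` homs (\<Phi> ! j) D)"
proof (intro equalityI subsetI)
  fix h assume h: "h \<in> homs (cq_of \<Phi>) M"
  show "h \<in> insert venus_map (\<Union>j < J. mars_map j ` homs (\<Phi> ! j) D)"
  proof (cases "\<exists>j < J. h (Inr j) = ElMars")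
    case True
    then show ?thesis
      using hom_with_mars_eq_mars_map[OF h] by blast
  next
    case False
    then show ?thesis
      using hom_without_mars_eq_venus_map[OF h] hom_planet[OF h] by blast
  qed
qed (use venus_map_in_homs mars_map_in_homs in auto)

lemma inj_on_mars_map: "inj_on (mars_map j) (homs (\<Phi> ! j) D)" if "j < J"
proof (rule inj_onI)
  fix g g' assume g: "g \<in> homs (\<Phi> ! j) D" and g': "g' \<in> homs (\<Phi> ! j) D"
    and eq: "mars_map j g = mars_map j g'"
  show "g = g'"
  proof (rule PiE_ext)
    show "g \<in> qvars (\<Phi> ! j) \<rightarrow>\<^sub>E elems D" "g' \<in> qvars (\<Phi> ! j) \<rightarrow>\<^sub>E elems D"
      using g g' unfolding homs_def by auto
    fix y assume "y \<in> qvars (\<Phi> ! j)"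
    then show "g y = g' y"
      using fun_cong[OF eq, of "Inl y"] that by (simp add: mars_map_Inl)
  qed
qed

lemma card_homs_cq_of_marsify:
  "card (homs (cq_of \<Phi>) M) = Suc (\<Sum>j < J. card (homs (\<Phi> ! j) D))"
proof -
  let ?H = "\<lambda>j. mars_map j ` homs (\<Phi> ! j) D"
  have finite: "finite (?H j)" if "j < J" for j
    using finite_homs[OF finite_disjunct[OF that]] wf_D unfolding wf_struct_def by blast
  have disjoint: "?H j \<inter> ?H k = {}" if "j < J" "k < J" "j \<noteq> k" for j k
    using that by (auto simp: mars_map_Inr dest!: fun_cong[of _ _ "Inr j"])
  have "venus_map \<notin> ?H j" if "j < J" for j
    using that
    by (auto simp: venus_map_def mars_map_Inr Inr_in_qvars_cq_of dest!: fun_cong[of _ _ "Inr j"])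
  then have "card (homs (cq_of \<Phi>) M) = Suc (card (\<Union>j < J. ?H j))"
    unfolding homs_cq_of_marsify using finite by simp
  also have "card (\<Union>j < J. ?H j) = (\<Sum>j < J. card (?H j))"
    using finite disjoint by (intro card_UN_disjoint) auto
  also have "\<dots> = (\<Sum>j < J. card (homs (\<Phi> ! j) D))"
    using inj_on_mars_map by (intro sum.cong) (auto simp: card_image)
  finally show ?thesis .
qed

end

theorem mainTheorem10:
  fixes Rs :: "'r set" and ar :: "'r \<Rightarrow> nat" and Cs :: "'c set"
    and \<Phi> :: "('r, 'v, 'c) ucq" and D :: "('r, 'c, 'e) rstruct"
  assumes "finite Rs" and "finite Cs"
    and "\<forall>\<phi> \<in> set \<Phi>. cq_over Rs ar Cs \<phi>"
    and "var_disjoint \<Phi>"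
    and "pleasant_ucq \<Phi>"
    and "wf_struct Rs ar Cs D"
  shows "count_cq (cq_of \<Phi>) (marsify Rs ar Cs D) = 1 + count_ucq \<Phi> D"
proof -
  interpret pleasant_ucq_over_struct Rs ar Cs \<Phi> D
    using assms(3-6) by unfold_locales
  have "count_ucq \<Phi> D = (\<Sum>j < length \<Phi>. card (homs (\<Phi> ! j) D))"
    unfolding count_ucq_def sum_list_sum_nth count_cq_eq_card_homs by (simp add: atLeast0LessThan)
  then show ?thesis
    unfolding count_cq_eq_card_homs card_homs_cq_of_marsify by simp
qed

end
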